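(* Let $q$ be odd with $q\equiv1\pmod4$ fixed. Then, as $g\to\infty$, $$\sum_{\substack{P\text{ monic irreducible}\\ \deg P=2g+1}}\ \sum_{n=0}^{g}\ \sum_{\substack{f\text{ monic},\ \deg f=n\\ f=\square}}\chi_P(f)\,q^{-n/2}=\frac{|P|}{\log_q|P|}\left(\left[\frac g2\right]+1\right)+O\!\left(\frac{\sqrt{|P|}}{\log_q|P|}\,g\right),$$ where $|P|=q^{2g+1}$, $\log_q|P|=2g+1$, and $[x]$ is the integer part of $x$.
   Context: $A=\mathbb{F}_q[T]$; for nonzero $f\in A$, $|f|=q^{\deg f}$. "$f=\square$" means $f$ is the square of a monic polynomial. For a monic irreducible $Q$ and $a\in A$, $\left(\frac{a}{Q}\right)$ is $0$ if $Q\mid a$, $1$ if $a$ is a nonzero square mod $Q$, $-1$ otherwise; extended to monic $f=\prod Q_i^{e_i}$ by $\left(\frac{a}{f}\right)=\prod\left(\frac{a}{Q_i}\right)^{e_i}$, $\left(\frac{a}{1}\right)=1$. For monic irreducible $P$, $\chi_P(f)=\left(\frac{P}{f}\right)$. Implied constants may depend on $q$. *)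

theory Defs
  imports "HOL-Computational_Algebra.Computational_Algebra" "HOL-Library.Landau_Symbols"
begin

definition poly_legendre :: "'a::field poly \<Rightarrow> 'a poly \<Rightarrow> int" where
  "poly_legendre a Q =
     (if Q dvd a then 0 else if (\<exists>b. Q dvd (b ^ 2 - a)) then 1 else -1)"

text \<open>Extension to monic f = prod Q_i^e_i (multiplicatively); (a/1) = 1.
  Over a field, prime_factorization yields the monic irreducible factors.\<close>
definition poly_jacobi :: "'a::field_gcd poly \<Rightarrow> 'a poly \<Rightarrow> int" where
  "poly_jacobi a f = (\<Prod>Q\<in>#prime_factorization f. poly_legendre a Q)"

definition chi :: "'a::field_gcd poly \<Rightarrow> 'a poly \<Rightarrow> int" where
  "chi P f = poly_jacobi P f"

definition monic :: "'a::field poly \<Rightarrow> bool" where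
  "monic f \<longleftrightarrow> lead_coeff f = 1"

definition is_monic_square :: "'a::field poly \<Rightarrow> bool" where
  "is_monic_square f \<longleftrightarrow> (\<exists>h. monic h \<and> f = h ^ 2)"

end

theory Submission
  imports Defs "HOL-Library.Cardinality"
begin

text \<open>For \<open>deg f \<le> g < deg P = 2g+1\<close> every monic square \<open>f = h\<^sup>2\<close> in the sum has
  \<open>\<chi>\<^sub>P(h\<^sup>2) = (P/h)\<^sup>2 = 1\<close>, since the irreducible \<open>P\<close> is coprime to the lower-degree \<open>h\<close>.
  So the inner sum over \<open>f\<close> of degree \<open>n\<close> is \<open>q\<^bsup>n/2\<^esup> q\<^bsup>-n/2\<^esup> = 1\<close> for even \<open>n\<close>
  and \<open>0\<close> for odd \<open>n\<close>, and the whole sum is exactly \<open>\<pi>\<^sub>q(2g+1) ([g/2] + 1)\<close>.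
  The estimate is then the prime polynomial theorem \<open>|\<pi>\<^sub>q(N) - q\<^sup>N/N| \<le> 2 q\<^bsup>N/2\<^esup>/N\<close>,
  which follows from Gauss's formula \<open>\<Sum>\<^bsub>d|N\<^esub> d \<pi>\<^sub>q(d) = q\<^sup>N\<close>.\<close>

lemma monic_nonzero: "monic f \<Longrightarrow> f \<noteq> 0"
  by (auto simp: monic_def)

lemma monic_mult: "monic f \<Longrightarrow> monic g \<Longrightarrow> monic (f * g)"
  by (simp add: monic_def lead_coeff_mult)

lemma monic_power: "monic f \<Longrightarrow> monic (f ^ n)"
  by (simp add: monic_def lead_coeff_power)

lemma monic_degree_eq_image_Poly:
  "{f::'a::field poly. monic f \<and> degree f = n} = (\<lambda>xs. Poly (xs @ [1])) ` {xs. length xs = n}"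
proof (intro equalityI subsetI)
  fix f :: "'a poly"
  assume "f \<in> {f. monic f \<and> degree f = n}"
  hence f: "lead_coeff f = 1" "degree f = n" "f \<noteq> 0" by (auto simp: monic_def)
  hence "last (coeffs f) = 1" by (simp add: last_coeffs_eq_coeff_degree)
  hence "f = Poly (butlast (coeffs f) @ [1])"
    using \<open>f \<noteq> 0\<close> by (metis append_butlast_last_id coeffs_eq_Nil Poly_coeffs)
  moreover have "length (butlast (coeffs f)) = n"
    using f by (simp add: degree_eq_length_coeffs)
  ultimately show "f \<in> (\<lambda>xs. Poly (xs @ [1])) ` {xs. length xs = n}"
    by blast
next
  fix f :: "'a poly"
  assume "f \<in> (\<lambda>xs. Poly (xs @ [1])) ` {xs. length xs = n}"
  then obtain xs where len: "length xs = n" and coeffs: "coeffs f = xs @ [1]"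
    by auto
  hence "f \<noteq> 0" by auto
  moreover have "lead_coeff f = 1"
    using coeffs \<open>f \<noteq> 0\<close> by (metis last_coeffs_eq_coeff_degree last_snoc)
  ultimately show "f \<in> {f. monic f \<and> degree f = n}"
    using coeffs len by (simp add: monic_def degree_eq_length_coeffs)
qed

lemma card_monic_degree:
  "card {f::'a::{finite,field} poly. monic f \<and> degree f = n} = CARD('a) ^ n"
proof -
  have "inj (\<lambda>xs::'a list. Poly (xs @ [1]))"
  proof (rule injI)
    fix xs ys :: "'a list"
    assume "Poly (xs @ [1]) = Poly (ys @ [1])"
    hence "coeffs (Poly (xs @ [1])) = coeffs (Poly (ys @ [1]))" by simp
    thus "xs = ys" unfolding coeffs_Poly by simp
  qed
  thus ?thesis
    unfolding monic_degree_eq_image_Poly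
    by (simp add: card_image inj_on_subset card_lists_length_eq[of UNIV, simplified])
qed

lemma finite_monic_degree: "finite {f::'a::{finite,field} poly. monic f \<and> degree f = n}"
  by (rule card_ge_0_finite) (simp add: card_monic_degree)

lemma card_monic_multiples:
  fixes D :: "'a::{finite,field} poly"
  assumes "monic D"
  shows "card {f. monic f \<and> degree f = N \<and> D dvd f} =
         (if degree D \<le> N then CARD('a) ^ (N - degree D) else 0)"
proof (cases "degree D \<le> N")
  case True
  have "{f. monic f \<and> degree f = N \<and> D dvd f} =
        (\<lambda>g. D * g) ` {g. monic g \<and> degree g = N - degree D}"
  proof (intro equalityI subsetI)
    fix f assume "f \<in> {f. monic f \<and> degree f = N \<and> D dvd f}"
    then obtain g where f: "monic f" "degree f = N" and g: "f = D * g"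
      by (auto elim: dvdE)
    with \<open>monic D\<close> have "monic g" "g \<noteq> 0"
      by (auto simp: monic_def lead_coeff_mult)
    with f g \<open>monic D\<close> show "f \<in> (\<lambda>g. D * g) ` {g. monic g \<and> degree g = N - degree D}"
      by (auto simp: degree_mult_eq monic_nonzero)
  next
    fix f assume "f \<in> (\<lambda>g. D * g) ` {g. monic g \<and> degree g = N - degree D}"
    with True \<open>monic D\<close> show "f \<in> {f. monic f \<and> degree f = N \<and> D dvd f}"
      by (auto simp: monic_mult degree_mult_eq monic_nonzero)
  qed
  moreover have "inj_on (\<lambda>g. D * g) {g. monic g \<and> degree g = N - degree D}"
    using monic_nonzero[OF \<open>monic D\<close>] by (auto intro: inj_onI)
  ultimately show ?thesis
    using True by (simp add: card_image card_monic_degree)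
next
  case False
  have "degree f \<noteq> N" if "monic f" "D dvd f" for f
    using False dvd_imp_degree_le[OF \<open>D dvd f\<close> monic_nonzero[OF \<open>monic f\<close>]] by simp
  hence "{f. monic f \<and> degree f = N \<and> D dvd f} = {}"
    by blast
  thus ?thesis
    using False by (simp only: card.empty if_False)
qed

lemma prime_iff_monic_irreducible:
  "prime (P::'a::field_gcd poly) \<longleftrightarrow> monic P \<and> irreducible P"
proof
  assume "prime P"
  hence "unit_factor P = 1" "P \<noteq> 0"
    by (auto intro: unit_factor_prime)
  hence "unit_factor (lead_coeff P) = 1"
    by (simp add: unit_factor_poly_def one_pCons)
  moreover have "unit_factor (lead_coeff P) = lead_coeff P"
    using \<open>P \<noteq> 0\<close> by (simp add: is_unit_unit_factor dvd_field_iff)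
  ultimately have "monic P"
    by (simp add: monic_def)
  with \<open>prime P\<close> show "monic P \<and> irreducible P"
    by (simp add: prime_elem_imp_irreducible)
next
  assume "monic P \<and> irreducible P"
  moreover have "normalize P = P" if "monic P"
    using that by (simp add: normalize_poly_def monic_def one_pCons[symmetric])
  ultimately show "prime P"
    by (simp add: prime_def irreducible_imp_prime_elem)
qed

lemma degree_eq_sum_prime_factors:
  fixes f :: "'a::field_gcd poly"
  assumes "f \<noteq> 0"
  shows "degree f = (\<Sum>P\<in>prime_factors f. multiplicity P f * degree P)"
proof -
  have "degree (normalize f) = degree f"
  proof (rule antisym)
    show "degree (normalize f) \<le> degree f"
      using assms by (intro dvd_imp_degree_le) auto
    show "degree f \<le> degree (normalize f)"
      using assms by (intro dvd_imp_degree_le) auto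
  qed
  hence "degree f = degree (\<Prod>P\<in>prime_factors f. P ^ multiplicity P f)"
    using assms by (simp add: prod_prime_factors)
  also have "\<dots> = (\<Sum>P\<in>prime_factors f. degree (P ^ multiplicity P f))"
    by (rule degree_prod_eq_sum_degree) auto
  also have "\<dots> = (\<Sum>P\<in>prime_factors f. multiplicity P f * degree P)"
    by (rule sum.cong) (auto simp: degree_power_eq in_prime_factors_iff)
  finally show ?thesis .
qed

lemma irreducible_degree_pos: "irreducible (P::'a::field poly) \<Longrightarrow> degree P > 0"
  using irreducible_not_unit[of P] is_unit_iff_degree[of P] by fastforce

lemma multiplicity_mult_degree_eq_sum:
  fixes f P :: "'a::field_gcd poly"
  assumes "f \<noteq> 0" "degree f \<le> N" "irreducible P"
  shows "multiplicity P f * degree P = (\<Sum>k\<in>{1..N}. if P ^ k dvd f then degree P else 0)"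
proof -
  have "\<not> is_unit P" "P \<noteq> 0" "degree P \<ge> 1"
    using \<open>irreducible P\<close> irreducible_degree_pos[of P] by (auto simp: irreducible_not_unit)
  have "multiplicity P f * degree P = degree (P ^ multiplicity P f)"
    using \<open>P \<noteq> 0\<close> by (simp add: degree_power_eq)
  also have "\<dots> \<le> degree f"
    using \<open>f \<noteq> 0\<close> by (intro dvd_imp_degree_le multiplicity_dvd)
  also have "\<dots> \<le> N"
    by (fact assms(2))
  finally have "multiplicity P f \<le> N"
    using \<open>degree P \<ge> 1\<close> by (metis le_trans mult.right_neutral mult_le_mono2)
  hence "{1..N} \<inter> {k. k \<le> multiplicity P f} = {1..multiplicity P f}"
    by auto
  moreover have "P ^ k dvd f \<longleftrightarrow> k \<le> multiplicity P f" for k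
    by (rule power_dvd_iff_le_multiplicity[OF \<open>f \<noteq> 0\<close> \<open>\<not> is_unit P\<close>])
  ultimately show ?thesis
    by (simp add: sum.If_cases)
qed

definition monic_irreducibles :: "nat \<Rightarrow> 'a::field_gcd poly set" where
  "monic_irreducibles d = {P. monic P \<and> irreducible P \<and> degree P = d}"

lemma finite_monic_irreducibles: "finite (monic_irreducibles d :: 'a::{finite,field_gcd} poly set)"
  by (rule finite_subset[OF _ finite_monic_degree[of d]]) (auto simp: monic_irreducibles_def)

lemma degree_eq_sum_prime_power_divisors:
  fixes f :: "'a::{finite,field_gcd} poly"
  assumes "monic f" "degree f \<le> N"
  shows "degree f = (\<Sum>P\<in>(\<Union>d\<in>{1..N}. monic_irreducibles d).
                       \<Sum>k\<in>{1..N}. if P ^ k dvd f then degree P else 0)"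
proof -
  have "f \<noteq> 0"
    using \<open>monic f\<close> by (rule monic_nonzero)
  have "degree f = (\<Sum>P\<in>prime_factors f. multiplicity P f * degree P)"
    using \<open>f \<noteq> 0\<close> by (rule degree_eq_sum_prime_factors)
  also have "\<dots> = (\<Sum>P\<in>(\<Union>d\<in>{1..N}. monic_irreducibles d). multiplicity P f * degree P)"
  proof (rule sum.mono_neutral_left)
    show "finite (\<Union>d\<in>{1..N}. monic_irreducibles d :: 'a poly set)"
      by (simp add: finite_monic_irreducibles)
    show "prime_factors f \<subseteq> (\<Union>d\<in>{1..N}. monic_irreducibles d)"
    proof
      fix P assume "P \<in> prime_factors f"
      hence "prime P" "P dvd f"
        by (auto simp: in_prime_factors_iff)
      hence "degree P \<le> N" "degree P \<ge> 1"
        using \<open>f \<noteq> 0\<close> assms(2) dvd_imp_degree_le[of P f]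
          irreducible_degree_pos[of P] prime_elem_imp_irreducible[of P] by auto
      with \<open>prime P\<close> show "P \<in> (\<Union>d\<in>{1..N}. monic_irreducibles d)"
        by (auto simp: monic_irreducibles_def prime_iff_monic_irreducible)
    qed
    show "\<forall>P\<in>(\<Union>d\<in>{1..N}. monic_irreducibles d) - prime_factors f. multiplicity P f * degree P = 0"
      using \<open>f \<noteq> 0\<close>
      by (auto simp: monic_irreducibles_def in_prime_factors_iff prime_iff_monic_irreducible
          not_dvd_imp_multiplicity_0)
  qed
  also have "\<dots> = (\<Sum>P\<in>(\<Union>d\<in>{1..N}. monic_irreducibles d).
                       \<Sum>k\<in>{1..N}. if P ^ k dvd f then degree P else 0)"
    using \<open>f \<noteq> 0\<close> assms(2)
    by (intro sum.cong refl multiplicity_mult_degree_eq_sum) (auto simp: monic_irreducibles_def)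
  finally show ?thesis .
qed

text \<open>For \<open>P\<close> monic irreducible of degree \<open>d\<close>, this counts the pairs \<open>(f, k)\<close> with \<open>k \<ge> 1\<close>,
  \<open>f\<close> monic of degree \<open>N\<close> and \<open>P\<^sup>k | f\<close> (with \<open>j = k d\<close>).\<close>

definition multiples_power_sum :: "nat \<Rightarrow> nat \<Rightarrow> nat \<Rightarrow> nat" where
  "multiples_power_sum q d N = (\<Sum>j\<in>{1..N}. if d dvd j then q ^ (N - j) else 0)"

lemma multiples_power_sum_Suc:
  "multiples_power_sum q d (Suc N) = (if d dvd Suc N then 1 else 0) + q * multiples_power_sum q d N"
proof -
  have "(\<Sum>j\<in>{1..N}. if d dvd j then q ^ (Suc N - j) else 0) =
        (\<Sum>j\<in>{1..N}. q * (if d dvd j then q ^ (N - j) else 0))"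
    by (rule sum.cong) (auto simp: Suc_diff_le)
  thus ?thesis
    unfolding multiples_power_sum_def by (simp add: sum.cl_ivl_Suc sum_distrib_left)
qed

lemma multiples_power_sum_eq_0: "N < d \<Longrightarrow> multiples_power_sum q d N = 0"
  unfolding multiples_power_sum_def by (rule sum.neutral) (auto dest: dvd_imp_le)

lemma sum_card_monic_multiples_powers:
  fixes P :: "'a::{finite,field_gcd} poly"
  assumes "monic P" "degree P = d" "d \<ge> 1"
  shows "(\<Sum>k\<in>{1..N}. card {f. monic f \<and> degree f = N \<and> P ^ k dvd f}) =
         multiples_power_sum CARD('a) d N"
proof -
  have "degree (P ^ k) = k * d" for k
    using assms by (simp add: degree_power_eq monic_nonzero)
  hence "(\<Sum>k\<in>{1..N}. card {f. monic f \<and> degree f = N \<and> P ^ k dvd f}) =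
        (\<Sum>k\<in>{1..N}. if k * d \<le> N then CARD('a) ^ (N - k * d) else 0)"
    using assms by (intro sum.cong refl) (simp add: card_monic_multiples monic_power)
  also have "\<dots> = (\<Sum>k\<in>{k\<in>{1..N}. k * d \<le> N}. CARD('a) ^ (N - k * d))"
    by (rule sum.inter_filter[symmetric]) simp
  also have "\<dots> = (\<Sum>j\<in>(\<lambda>k. k * d) ` {k\<in>{1..N}. k * d \<le> N}. CARD('a) ^ (N - j))"
    using \<open>d \<ge> 1\<close> by (simp add: sum.reindex inj_on_def)
  also have "(\<lambda>k. k * d) ` {k\<in>{1..N}. k * d \<le> N} = {j\<in>{1..N}. d dvd j}"
  proof (intro equalityI subsetI)
    fix j assume "j \<in> {j\<in>{1..N}. d dvd j}"
    then obtain k where "j = k * d" "1 \<le> j" "j \<le> N"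
      by (auto elim!: dvdE simp: mult.commute)
    moreover from this \<open>d \<ge> 1\<close> have "1 \<le> k" "k \<le> N"
      by (auto intro: order.trans[OF _ \<open>j \<le> N\<close>])
    ultimately show "j \<in> (\<lambda>k. k * d) ` {k\<in>{1..N}. k * d \<le> N}"
      by auto
  qed (use \<open>d \<ge> 1\<close> in \<open>auto intro: order.trans[of 1 d] simp: mult_le_mono\<close>)
  also have "(\<Sum>j\<in>{j\<in>{1..N}. d dvd j}. CARD('a) ^ (N - j)) = multiples_power_sum CARD('a) d N"
    unfolding multiples_power_sum_def by (rule sum.inter_filter) simp
  finally show ?thesis .
qed

lemma sum_degree_monic_eq:
  "N * CARD('a) ^ N = (\<Sum>d\<in>{1..N}. d * card (monic_irreducibles d :: 'a::{finite,field_gcd} poly set)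
                          * multiples_power_sum CARD('a) d N)"
proof -
  let ?M = "{f::'a poly. monic f \<and> degree f = N}"
  let ?I = "\<lambda>d. monic_irreducibles d :: 'a poly set"
  have "N * CARD('a) ^ N = (\<Sum>f\<in>?M. degree f)"
    by (simp add: card_monic_degree)
  also have "\<dots> = (\<Sum>f\<in>?M. \<Sum>P\<in>(\<Union>d\<in>{1..N}. ?I d). \<Sum>k\<in>{1..N}. if P ^ k dvd f then degree P else 0)"
    by (intro sum.cong refl degree_eq_sum_prime_power_divisors) auto
  also have "\<dots> = (\<Sum>P\<in>(\<Union>d\<in>{1..N}. ?I d). \<Sum>k\<in>{1..N}. \<Sum>f\<in>?M. if P ^ k dvd f then degree P else 0)"
    by (subst sum.swap) (simp add: sum.swap[of _ _ ?M])
  also have "\<dots> = (\<Sum>P\<in>(\<Union>d\<in>{1..N}. ?I d). degree P * multiples_power_sum CARD('a) (degree P) N)"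
  proof (intro sum.cong refl)
    fix P assume P: "P \<in> (\<Union>d\<in>{1..N}. ?I d)"
    have "(\<Sum>k\<in>{1..N}. \<Sum>f\<in>?M. if P ^ k dvd f then degree P else 0) =
          degree P * (\<Sum>k\<in>{1..N}. card {f. monic f \<and> degree f = N \<and> P ^ k dvd f})"
      by (simp add: sum.If_cases finite_monic_degree sum_distrib_left Int_def conj_assoc mult.commute)
    also have "\<dots> = degree P * multiples_power_sum CARD('a) (degree P) N"
      using P by (subst sum_card_monic_multiples_powers) (auto simp: monic_irreducibles_def)
    finally show "(\<Sum>k\<in>{1..N}. \<Sum>f\<in>?M. if P ^ k dvd f then degree P else 0) =
                  degree P * multiples_power_sum CARD('a) (degree P) N" .
  qed
  also have "\<dots> = (\<Sum>d\<in>{1..N}. \<Sum>P\<in>?I d. d * multiples_power_sum CARD('a) d N)"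
    using finite_monic_irreducibles
    by (subst sum.UNION_disjoint) (auto simp: monic_irreducibles_def)
  finally show ?thesis
    by (simp add: ac_simps)
qed

lemma sum_divisors_degree_card_monic_irreducibles:
  assumes "N \<ge> 1"
  shows "(\<Sum>d | d dvd N. d * card (monic_irreducibles d :: 'a::{finite,field_gcd} poly set)) =
         CARD('a) ^ N"
proof -
  \<comment> \<open>Subtract \<open>q\<close> times the identity \<open>sum_degree_monic_eq\<close> for \<open>N - 1\<close> from the one for \<open>N\<close>.\<close>
  obtain M where M: "N = Suc M"
    using assms by (cases N) auto
  define p where "p d = d * card (monic_irreducibles d :: 'a poly set)" for d
  define q where "q = CARD('a)"
  have "{d. d dvd N} = {d\<in>{1..N}. d dvd N}"
    using assms by (auto dest: dvd_imp_le intro: Suc_leI gr0I)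
  hence "(\<Sum>d | d dvd N. p d) = (\<Sum>d\<in>{1..N}. if d dvd N then p d else 0)"
    by (simp only: sum.inter_filter[OF finite_atLeastAtMost])
  moreover have "Suc M * q ^ Suc M = (\<Sum>d\<in>{1..Suc M}. p d * (if d dvd Suc M then 1 else 0)) +
                                     q * (M * q ^ M)"
  proof -
    have "Suc M * q ^ Suc M = (\<Sum>d\<in>{1..Suc M}. p d * multiples_power_sum q d (Suc M))"
      unfolding p_def q_def by (rule sum_degree_monic_eq)
    also have "\<dots> = (\<Sum>d\<in>{1..Suc M}. p d * (if d dvd Suc M then 1 else 0)) +
                     q * (\<Sum>d\<in>{1..Suc M}. p d * multiples_power_sum q d M)"
      by (simp add: multiples_power_sum_Suc algebra_simps sum.distrib sum_distrib_left)
    also have "(\<Sum>d\<in>{1..Suc M}. p d * multiples_power_sum q d M) =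
               (\<Sum>d\<in>{1..M}. p d * multiples_power_sum q d M)"
      by (simp add: sum.cl_ivl_Suc multiples_power_sum_eq_0)
    also have "\<dots> = M * q ^ M"
      unfolding p_def q_def by (rule sum_degree_monic_eq[symmetric])
    finally show ?thesis .
  qed
  moreover have "p d * (if d dvd N then 1 else 0) = (if d dvd N then p d else 0)" for d
    by simp
  ultimately show ?thesis
    by (simp add: M p_def q_def algebra_simps)
qed

lemma degree_times_card_monic_irreducibles_le:
  assumes "d \<ge> 1"
  shows "d * card (monic_irreducibles d :: 'a::{finite,field_gcd} poly set) \<le> CARD('a) ^ d"
proof -
  have "d * card (monic_irreducibles d :: 'a poly set) \<le>
        (\<Sum>e | e dvd d. e * card (monic_irreducibles e :: 'a poly set))"
    using assms by (intro member_le_sum) (auto intro: finite_divisors_nat)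
  thus ?thesis
    using sum_divisors_degree_card_monic_irreducibles[OF assms, where 'a='a] by simp
qed

lemma sum_powers_le: "(q::nat) \<ge> 2 \<Longrightarrow> (\<Sum>d\<in>{1..n}. q ^ d) \<le> 2 * q ^ n"
proof (induction n)
  case (Suc n)
  hence "(\<Sum>d\<in>{1..Suc n}. q ^ d) \<le> 2 * q ^ n + q ^ Suc n"
    by (simp add: sum.cl_ivl_Suc)
  also have "2 * q ^ n \<le> q ^ Suc n"
    using Suc.prems by simp
  finally show ?case
    by simp
qed simp

lemma card_UNIV_field_ge_2: "CARD('a::{finite,field}) \<ge> 2"
  using card_mono[of "UNIV :: 'a set" "{0, 1}"] by simp

lemma power_le_degree_times_card_monic_irreducibles:
  assumes "N \<ge> 1"
  shows "CARD('a) ^ N \<le> N * card (monic_irreducibles N :: 'a::{finite,field_gcd} poly set) +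
                         2 * CARD('a) ^ (N div 2)"
proof -
  define p where "p d = d * card (monic_irreducibles d :: 'a poly set)" for d
  have "{d. d dvd N} \<subseteq> insert N {1..N div 2}"
  proof
    fix d assume "d \<in> {d. d dvd N}"
    then obtain m where "N = d * m" by (auto elim: dvdE)
    show "d \<in> insert N {1..N div 2}"
    proof (cases "m \<ge> 2")
      case True
      hence "d * 2 \<le> N"
        using \<open>N = d * m\<close> by (metis mult_le_mono2)
      with assms \<open>N = d * m\<close> show ?thesis
        by (auto intro: Suc_leI simp: less_eq_div_iff_mult_less_eq)
    next
      case False
      with assms \<open>N = d * m\<close> show ?thesis
        by (cases m) auto
    qed
  qed
  hence "CARD('a) ^ N \<le> (\<Sum>d\<in>insert N {1..N div 2}. p d)"
    unfolding p_def sum_divisors_degree_card_monic_irreducibles[OF assms, where 'a='a, symmetric]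
    by (intro sum_mono2) auto
  also have "\<dots> \<le> p N + (\<Sum>d\<in>{1..N div 2}. p d)"
    by (simp add: sum.insert_if)
  also have "(\<Sum>d\<in>{1..N div 2}. p d) \<le> (\<Sum>d\<in>{1..N div 2}. CARD('a) ^ d)"
    unfolding p_def by (intro sum_mono degree_times_card_monic_irreducibles_le) simp
  also have "\<dots> \<le> 2 * CARD('a) ^ (N div 2)"
    by (intro sum_powers_le card_UNIV_field_ge_2)
  finally show ?thesis
    by (simp add: p_def)
qed

lemma poly_jacobi_square:
  fixes a h :: "'a::field_gcd poly"
  assumes "coprime a h" "h \<noteq> 0"
  shows "poly_jacobi a (h ^ 2) = 1"
proof -
  have "poly_legendre a Q * poly_legendre a Q = 1" if "Q \<in># prime_factorization h" for Q
  proof -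
    have "prime Q" "Q dvd h"
      using that by (auto simp: in_prime_factors_iff)
    hence "\<not> Q dvd a"
      using assms(1) coprime_common_divisor[of a h Q] not_prime_unit[of Q] by blast
    thus ?thesis
      by (simp add: poly_legendre_def)
  qed
  hence "(\<Prod>Q\<in>#prime_factorization h. poly_legendre a Q * poly_legendre a Q) = 1"
    by (intro prod_mset.neutral) auto
  moreover have "prime_factorization (h ^ 2) = prime_factorization h + prime_factorization h"
    using assms(2) by (simp add: power2_eq_square prime_factorization_mult)
  ultimately show ?thesis
    by (simp add: poly_jacobi_def prod_mset.distrib)
qed

lemma chi_square_eq_1:
  fixes P h :: "'a::field_gcd poly"
  assumes "irreducible P" "h \<noteq> 0" "degree h < degree P"
  shows "chi P (h ^ 2) = 1"
proof -
  have "\<not> P dvd h"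
    using assms dvd_imp_degree_le[of P h] by auto
  hence "coprime P h"
    using \<open>irreducible P\<close> by (intro prime_elem_imp_coprime irreducible_imp_prime_elem)
  thus ?thesis
    unfolding chi_def using \<open>h \<noteq> 0\<close> by (rule poly_jacobi_square)
qed

lemma inj_on_square_monic: "inj_on (\<lambda>h::'a::field poly. h ^ 2) {h. monic h}"
proof (rule inj_onI)
  fix h k :: "'a poly"
  assume "h \<in> {h. monic h}" "k \<in> {h. monic h}" "h ^ 2 = k ^ 2"
  hence "(h - k) * (h + k) = 0"
    by (simp add: algebra_simps power2_eq_square)
  hence "h = k \<or> h = - k"
    by (auto simp: eq_neg_iff_add_eq_0)
  \<comment> \<open>Comparing leading coefficients forces \<open>1 = -1\<close>; this also covers characteristic 2.\<close>
  moreover have "k = - k" if "h = - k"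
  proof -
    have "(1::'a) = - 1"
      using that \<open>h \<in> {h. monic h}\<close> \<open>k \<in> {h. monic h}\<close> by (simp add: monic_def)
    hence "smult (- 1) k = k"
      by (metis smult_1_left)
    thus ?thesis
      by simp
  qed
  ultimately show "h = k"
    by auto
qed

lemma monic_squares_eq_image:
  "{f::'a::field poly. monic f \<and> degree f = n \<and> is_monic_square f} =
   (\<lambda>h. h ^ 2) ` {h. monic h \<and> 2 * degree h = n}"
  by (auto simp: is_monic_square_def monic_power degree_power_eq monic_nonzero mult.commute)

lemma sum_chi_monic_squares:
  fixes P :: "'a::{finite,field_gcd} poly"
  assumes "irreducible P" "n < 2 * degree P"
  shows "(\<Sum>f\<in>{f. monic f \<and> degree f = n \<and> is_monic_square f}.
            real_of_int (chi P f) * real CARD('a) powr (- real n / 2)) = (if even n then 1 else 0)"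
proof -
  have "inj_on (\<lambda>h. h ^ 2) {h::'a poly. monic h \<and> 2 * degree h = n}"
    by (rule inj_on_subset[OF inj_on_square_monic]) auto
  have "(\<Sum>f\<in>{f. monic f \<and> degree f = n \<and> is_monic_square f}.
            real_of_int (chi P f) * real CARD('a) powr (- real n / 2)) =
        (\<Sum>h\<in>{h::'a poly. monic h \<and> 2 * degree h = n}. real CARD('a) powr (- real n / 2))"
    unfolding monic_squares_eq_image sum.reindex[OF \<open>inj_on _ _\<close>] o_def
    using assms by (intro sum.cong refl) (auto simp: chi_square_eq_1 monic_nonzero)
  also have "\<dots> = (if even n then 1 else 0)"
  proof (cases "even n")
    case True
    then obtain m where "n = 2 * m"
      by blast
    thus ?thesis
      by (simp add: card_monic_degree powr_minus powr_realpow divide_simps)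
  next
    case False
    hence "{h::'a poly. monic h \<and> 2 * degree h = n} = {}"
      by auto
    thus ?thesis
      using False by (simp only: sum.empty if_False)
  qed
  finally show ?thesis .
qed

lemma power_div_2_le_sqrt_power:
  assumes "(x::real) \<ge> 1"
  shows "x ^ (n div 2) \<le> sqrt (x ^ n)"
proof (rule real_le_rsqrt)
  have "(x ^ (n div 2))\<^sup>2 = x ^ (2 * (n div 2))"
    by (simp add: power_mult[symmetric] mult.commute)
  also have "\<dots> \<le> x ^ n"
    using assms by (intro power_increasing) auto
  finally show "(x ^ (n div 2))\<^sup>2 \<le> x ^ n" .
qed

theorem prime_polynomial_theorem:
  assumes "N \<ge> 1"
  shows "\<bar>real (card (monic_irreducibles N :: 'a::{finite,field_gcd} poly set)) - real CARD('a) ^ N / N\<bar>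
         \<le> 2 * sqrt (real CARD('a) ^ N) / N"
proof -
  let ?c = "real (card (monic_irreducibles N :: 'a poly set))" and ?q = "real CARD('a)"
  have "N * ?c \<le> ?q ^ N"
    using degree_times_card_monic_irreducibles_le[OF assms, where 'a='a] of_nat_mono by fastforce
  moreover have "?q ^ N \<le> N * ?c + 2 * ?q ^ (N div 2)"
    using power_le_degree_times_card_monic_irreducibles[OF assms, where 'a='a] of_nat_mono
    by fastforce
  moreover have "?q ^ (N div 2) \<le> sqrt (?q ^ N)"
    by (rule power_div_2_le_sqrt_power) (simp add: Suc_leI)
  ultimately have "\<bar>N * ?c - ?q ^ N\<bar> \<le> 2 * sqrt (?q ^ N)"
    by linarith
  moreover have "\<bar>?c - ?q ^ N / N\<bar> = \<bar>N * ?c - ?q ^ N\<bar> / N"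
    using assms by (simp add: field_simps abs_divide)
  ultimately show ?thesis
    by (simp add: divide_right_mono)
qed

lemma sum_even_indicator: "(\<Sum>n=0..g. if even n then 1 else 0 :: real) = real (g div 2 + 1)"
  by (induction g) (simp_all add: sum.cl_ivl_Suc)

lemma sum_chi_monic_squares_prime_degree_odd:
  fixes q :: nat
  assumes "CARD('a) = q"
  shows "(\<Sum>P\<in>{P :: 'a::{finite,field_gcd} poly. monic P \<and> irreducible P \<and> degree P = 2*g+1}.
            \<Sum>n=0..g. \<Sum>f\<in>{f :: 'a poly. monic f \<and> degree f = n \<and> is_monic_square f}.
              real_of_int (chi P f) * real q powr (- real n / 2))
         = real (card (monic_irreducibles (2*g+1) :: 'a poly set)) * real (g div 2 + 1)"
proof -
  have "(\<Sum>n=0..g. \<Sum>f\<in>{f :: 'a poly. monic f \<and> degree f = n \<and> is_monic_square f}.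
           real_of_int (chi P f) * real q powr (- real n / 2)) = real (g div 2 + 1)"
    if "P \<in> monic_irreducibles (2*g+1)" for P
  proof -
    have "(\<Sum>n=0..g. \<Sum>f\<in>{f :: 'a poly. monic f \<and> degree f = n \<and> is_monic_square f}.
             real_of_int (chi P f) * real q powr (- real n / 2)) = (\<Sum>n=0..g. if even n then 1 else 0)"
      unfolding assms[symmetric] using that
      by (intro sum.cong refl sum_chi_monic_squares) (auto simp: monic_irreducibles_def)
    thus ?thesis
      by (simp only: sum_even_indicator)
  qed
  thus ?thesis
    by (simp add: monic_irreducibles_def[symmetric])
qed

theorem proposition3p1:
  fixes q :: nat
  assumes "card (UNIV :: 'a::{finite,field_gcd} set) = q" and "odd q" and "q mod 4 = 1"
  shows "(\<lambda>g::nat.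
      (\<Sum>P\<in>{P :: 'a poly. monic P \<and> irreducible P \<and> degree P = 2*g+1}.
         \<Sum>n=0..g. \<Sum>f\<in>{f :: 'a poly. monic f \<and> degree f = n \<and> is_monic_square f}.
            real_of_int (chi P f) * real q powr (- real n / 2))
      - (real q ^ (2*g+1) / real (2*g+1)) * real (g div 2 + 1))
    \<in> O(\<lambda>g. sqrt (real q ^ (2*g+1)) / real (2*g+1) * real g)"
proof -
  have "\<bar>(real (card (monic_irreducibles (2*g+1) :: 'a poly set)) - real q ^ (2*g+1) / real (2*g+1))
          * real (g div 2 + 1)\<bar> \<le> 4 * (sqrt (real q ^ (2*g+1)) / real (2*g+1) * real g)"
    if "g \<ge> 1" for g
  proof -
    have "real (g div 2 + 1) \<le> 2 * real g"
      using that by linarith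
    moreover have "\<bar>real (card (monic_irreducibles (2*g+1) :: 'a poly set)) - real q ^ (2*g+1) / real (2*g+1)\<bar>
                   \<le> 2 * sqrt (real q ^ (2*g+1)) / real (2*g+1)"
      using prime_polynomial_theorem[of "2*g+1", where 'a='a] assms(1) by simp
    ultimately have "\<bar>real (card (monic_irreducibles (2*g+1) :: 'a poly set)) - real q ^ (2*g+1) / real (2*g+1)\<bar>
          * real (g div 2 + 1) \<le> 2 * sqrt (real q ^ (2*g+1)) / real (2*g+1) * (2 * real g)"
      by (intro mult_mono) auto
    thus ?thesis
      by (simp add: abs_mult)
  qed
  thus ?thesis
    unfolding sum_chi_monic_squares_prime_degree_odd[OF assms(1)] left_diff_distrib[symmetric]
    by (intro bigoI[where c = 4] eventually_at_top_linorderI[of 1]) simp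
qed

end
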